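(* Let $y\in\mathbb{R}^n$, $\lambda\ge0$, $i\in[n]$ and let $J=[j_1:j_2]\subseteq[n]$ be an interval with $i\in J$. For $a,b\in\mathbb{R}$ let $$L^{J,a,b}(\theta_J)=\frac12\sum_{j=j_1}^{j_2}(y_j-\theta_j)^2+\lambda\Big(\sum_{j=j_1}^{j_2-1}|\theta_{j+1}-\theta_j|+|\theta_{j_1}-a|+|\theta_{j_2}-b|\Big),\qquad \theta_J=(\theta_{j_1},\dots,\theta_{j_2})\in\mathbb{R}^{|J|},$$ and let $\hat\theta^{J,a,b}$ be its minimizer, with $\hat\theta^{J,a,b}_i$ its entry indexed by $i$. Then $$\sup_{a,b\in\mathbb{R}}\hat\theta^{J,a,b}_i\le\max_{I\subseteq J \text{ interval},\ i\in I}\Big(\overline{y}_I-2\lambda\frac{C_{I,J}}{|I|}\Big).$$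
   Context: An interval is $[a:b]=\{a,\dots,b\}\subseteq[n]$. $\overline{y}_I$ is the average of $y_j$, $j\in I$. For intervals $I\subseteq J=[j_1:j_2]$: $C_{I,J}=1$ if $I$ contains neither $j_1$ nor $j_2$; $C_{I,J}=-1$ if $I=J$; $C_{I,J}=0$ otherwise. *)

theory Defs
  imports Main Complex_Main
begin

text \<open>Vectors y in R^n are functions nat => real, indexed by [n] = {1..n}.
  An interval [a:b] is the set {a..b} of naturals.\<close>

definition avg :: "(nat \<Rightarrow> real) \<Rightarrow> nat set \<Rightarrow> real" where
  "avg y I = (\<Sum>j\<in>I. y j) / real (card I)"

definition CIJ :: "nat set \<Rightarrow> nat \<Rightarrow> nat \<Rightarrow> real" where
  "CIJ I j1 j2 = (if I = {j1..j2} then -1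
                  else if j1 \<notin> I \<and> j2 \<notin> I then 1 else 0)"

definition Lfun :: "(nat \<Rightarrow> real) \<Rightarrow> real \<Rightarrow> nat \<Rightarrow> nat \<Rightarrow> real \<Rightarrow> real \<Rightarrow> (nat \<Rightarrow> real) \<Rightarrow> real" where
  "Lfun y lam j1 j2 a b \<theta> =
     (1/2) * (\<Sum>j=j1..j2. (y j - \<theta> j)^2)
     + lam * ((\<Sum>j=j1..<j2. \<bar>\<theta> (j+1) - \<theta> j\<bar>) + \<bar>\<theta> j1 - a\<bar> + \<bar>\<theta> j2 - b\<bar>)"

text \<open>theta is a minimizer of L^{J,a,b} over R^{|J|} (entries outside J are irrelevant).\<close>
definition is_minimizer :: "(nat \<Rightarrow> real) \<Rightarrow> real \<Rightarrow> nat \<Rightarrow> nat \<Rightarrow> real \<Rightarrow> real \<Rightarrow> (nat \<Rightarrow> real) \<Rightarrow> bool" where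
  "is_minimizer y lam j1 j2 a b \<theta> \<longleftrightarrow>
     (\<forall>\<eta>. Lfun y lam j1 j2 a b \<theta> \<le> Lfun y lam j1 j2 a b \<eta>)"

end

theory Submission
  imports Defs
begin

text \<open>Let m = \<theta> i, let I = [p:q] be the maximal interval of J containing i on which \<theta> \<ge> m,
  and let S be the sum of the residuals \<theta> j - y j over I. Lowering \<theta> by a small \<epsilon> > 0 on I
  changes the quadratic part of the objective by -\<epsilon> S + O(\<epsilon>^2), and the penalty by at most
  -2 \<epsilon> C(I,J): the jump at an end of I inside J shrinks by \<epsilon>, the boundary term at an end of I
  that is an end of J grows by at most \<epsilon>. Minimality therefore forces S \<le> -2 \<lambda> C(I,J), and as
  \<theta> \<ge> m on I this gives m \<le> avg y I - 2 \<lambda> C(I,J) / |I|.\<close>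

definition fused_tv :: "nat \<Rightarrow> nat \<Rightarrow> real \<Rightarrow> real \<Rightarrow> (nat \<Rightarrow> real) \<Rightarrow> real" where
  "fused_tv j1 j2 a b \<theta> = (\<Sum>j=j1..<j2. \<bar>\<theta> (j+1) - \<theta> j\<bar>) + \<bar>\<theta> j1 - a\<bar> + \<bar>\<theta> j2 - b\<bar>"

definition lower_on :: "nat set \<Rightarrow> real \<Rightarrow> (nat \<Rightarrow> real) \<Rightarrow> nat \<Rightarrow> real" where
  "lower_on I \<epsilon> \<theta> j = (if j \<in> I then \<theta> j - \<epsilon> else \<theta> j)"

lemma Lfun_eq_fused_tv:
  "Lfun y lam j1 j2 a b \<theta> = 1/2 * (\<Sum>j=j1..j2. (y j - \<theta> j)^2) + lam * fused_tv j1 j2 a b \<theta>"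
  by (simp add: Lfun_def fused_tv_def)

lemma CIJ_atLeastAtMost:
  assumes "j1 \<le> p" "p \<le> q" "q \<le> j2"
  shows "CIJ {p..q} j1 j2 = 1 - of_bool (p = j1) - of_bool (q = j2)"
  using assms by (auto simp: CIJ_def)

lemma sum_sq_lower_on:
  assumes "finite J" "I \<subseteq> J"
  shows "(\<Sum>j\<in>J. (y j - lower_on I \<epsilon> \<theta> j)^2)
    = (\<Sum>j\<in>J. (y j - \<theta> j)^2) - 2 * \<epsilon> * (\<Sum>j\<in>I. \<theta> j - y j) + \<epsilon>^2 * card I"
proof -
  have "(y j - lower_on I \<epsilon> \<theta> j)^2
      = (y j - \<theta> j)^2 + (if j \<in> I then \<epsilon>^2 - 2 * \<epsilon> * (\<theta> j - y j) else 0)" for j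
    by (simp add: lower_on_def power2_eq_square algebra_simps)
  then have "(\<Sum>j\<in>J. (y j - lower_on I \<epsilon> \<theta> j)^2)
      = (\<Sum>j\<in>J. (y j - \<theta> j)^2) + (\<Sum>j\<in>I. \<epsilon>^2 - 2 * \<epsilon> * (\<theta> j - y j))"
    using assms sum.inter_restrict[OF assms(1), of "\<lambda>j. \<epsilon>^2 - 2 * \<epsilon> * (\<theta> j - y j)" I]
    by (simp add: sum.distrib Int_absorb1)
  then show ?thesis
    by (simp add: sum_subtractf sum_distrib_left[symmetric])
qed

lemma fused_tv_lower_on:
  assumes "0 \<le> \<epsilon>" "j1 \<le> p" "p \<le> q" "q \<le> j2"
    and left_gap: "j1 < p \<Longrightarrow> \<theta> (p - 1) + \<epsilon> \<le> \<theta> p"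
    and right_gap: "q < j2 \<Longrightarrow> \<theta> (q + 1) + \<epsilon> \<le> \<theta> q"
  shows "fused_tv j1 j2 a b (lower_on {p..q} \<epsilon> \<theta>)
    \<le> fused_tv j1 j2 a b \<theta> - 2 * \<epsilon> * CIJ {p..q} j1 j2"
proof -
  let ?\<eta> = "lower_on {p..q} \<epsilon> \<theta>"
  have jump: "\<bar>?\<eta> (j+1) - ?\<eta> j\<bar>
      \<le> \<bar>\<theta> (j+1) - \<theta> j\<bar> - \<epsilon> * of_bool (j + 1 = p) - \<epsilon> * of_bool (j = q)"
    if "j \<in> {j1..<j2}" for j
  proof -
    consider "j + 1 = p" | "j = q" | "j + 1 \<noteq> p" "j \<noteq> q" by blast
    then show ?thesis
    proof cases
      case 1
      then have "j \<noteq> q" "\<theta> j + \<epsilon> \<le> \<theta> p" using that left_gap \<open>p \<le> q\<close> by auto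
      with 1 \<open>p \<le> q\<close> show ?thesis by (auto simp: lower_on_def)
    next
      case 2
      then have "j + 1 \<noteq> p" "\<theta> (j + 1) + \<epsilon> \<le> \<theta> q" using that right_gap \<open>p \<le> q\<close> by auto
      with 2 \<open>p \<le> q\<close> show ?thesis by (auto simp: lower_on_def)
    next
      case 3
      then have "j + 1 \<in> {p..q} \<longleftrightarrow> j \<in> {p..q}" by auto
      with 3 show ?thesis by (simp add: lower_on_def)
    qed
  qed
  have "(\<Sum>j=j1..<j2. \<bar>?\<eta> (j+1) - ?\<eta> j\<bar>)
      \<le> (\<Sum>j=j1..<j2. \<bar>\<theta> (j+1) - \<theta> j\<bar> - \<epsilon> * of_bool (j + 1 = p) - \<epsilon> * of_bool (j = q))"
    by (rule sum_mono) (rule jump)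
  also have "\<dots> = (\<Sum>j=j1..<j2. \<bar>\<theta> (j+1) - \<theta> j\<bar>) - \<epsilon> * of_bool (j1 < p) - \<epsilon> * of_bool (q < j2)"
  proof -
    have "{j1..<j2} \<inter> {j. j + 1 = p} = (if j1 < p then {p - 1} else {})"
      using assms(2-4) by auto
    moreover have "{j1..<j2} \<inter> {j. j = q} = (if q < j2 then {q} else {})"
      using assms(2-4) by auto
    ultimately show ?thesis
      by (simp add: sum_subtractf sum_distrib_left[symmetric])
  qed
  finally have "(\<Sum>j=j1..<j2. \<bar>?\<eta> (j+1) - ?\<eta> j\<bar>)
      \<le> (\<Sum>j=j1..<j2. \<bar>\<theta> (j+1) - \<theta> j\<bar>) - \<epsilon> * of_bool (j1 < p) - \<epsilon> * of_bool (q < j2)" .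
  moreover have "\<bar>?\<eta> j1 - a\<bar> \<le> \<bar>\<theta> j1 - a\<bar> + \<epsilon> * of_bool (p = j1)"
    using assms(1-3) by (auto simp: lower_on_def)
  moreover have "\<bar>?\<eta> j2 - b\<bar> \<le> \<bar>\<theta> j2 - b\<bar> + \<epsilon> * of_bool (q = j2)"
    using assms(1,3,4) by (auto simp: lower_on_def)
  ultimately show ?thesis
    using assms(2-4) by (auto simp: fused_tv_def CIJ_atLeastAtMost algebra_simps)
qed

lemma Lfun_lower_on:
  assumes "0 \<le> lam" "0 \<le> \<epsilon>" "j1 \<le> p" "p \<le> q" "q \<le> j2"
    and "j1 < p \<Longrightarrow> \<theta> (p - 1) + \<epsilon> \<le> \<theta> p"
    and "q < j2 \<Longrightarrow> \<theta> (q + 1) + \<epsilon> \<le> \<theta> q"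
  shows "Lfun y lam j1 j2 a b (lower_on {p..q} \<epsilon> \<theta>)
    \<le> Lfun y lam j1 j2 a b \<theta>
       - \<epsilon> * ((\<Sum>j=p..q. \<theta> j - y j) + 2 * lam * CIJ {p..q} j1 j2) + \<epsilon>^2 * card {p..q} / 2"
proof -
  have "lam * fused_tv j1 j2 a b (lower_on {p..q} \<epsilon> \<theta>)
      \<le> lam * (fused_tv j1 j2 a b \<theta> - 2 * \<epsilon> * CIJ {p..q} j1 j2)"
    using fused_tv_lower_on[OF assms(2-7)] assms(1) by (rule mult_left_mono)
  moreover have "{p..q} \<subseteq> {j1..j2}"
    using assms(3,5) by auto
  ultimately show ?thesis
    by (simp add: Lfun_eq_fused_tv sum_sq_lower_on algebra_simps)
qed

lemma nonpos_if_le_vanishing_multiples: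
  fixes x c \<delta> :: real
  assumes "0 < \<delta>" and le: "\<And>\<epsilon>. 0 < \<epsilon> \<Longrightarrow> \<epsilon> \<le> \<delta> \<Longrightarrow> x \<le> \<epsilon> * c"
  shows "x \<le> 0"
proof (rule ccontr)
  assume "\<not> x \<le> 0"
  moreover have "x \<le> \<delta> * c"
    using le \<open>0 < \<delta>\<close> by simp
  ultimately have "0 < c"
    using \<open>0 < \<delta>\<close> by (smt (verit) mult_nonneg_nonpos)
  define \<epsilon> where "\<epsilon> = min \<delta> (x / (2 * c))"
  have "0 < \<epsilon>" "\<epsilon> \<le> \<delta>"
    using \<open>0 < \<delta>\<close> \<open>0 < c\<close> \<open>\<not> x \<le> 0\<close> by (auto simp: \<epsilon>_def)
  then have "x \<le> \<epsilon> * c"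
    by (rule le)
  also have "\<dots> \<le> x / 2"
    using \<open>0 < c\<close> by (simp add: \<epsilon>_def min_def field_simps)
  finally show False
    using \<open>\<not> x \<le> 0\<close> by simp
qed

lemma minimizer_residual_sum_le:
  assumes minimizer: "is_minimizer y lam j1 j2 a b \<theta>" and "0 \<le> lam"
    and "j1 \<le> p" "p \<le> q" "q \<le> j2"
    and above: "\<forall>j\<in>{p..q}. m \<le> \<theta> j"
    and left: "j1 < p \<Longrightarrow> \<theta> (p - 1) < m"
    and right: "q < j2 \<Longrightarrow> \<theta> (q + 1) < m"
  shows "(\<Sum>j=p..q. \<theta> j - y j) \<le> - 2 * lam * CIJ {p..q} j1 j2"
proof -
  define r where "r = (\<Sum>j=p..q. \<theta> j - y j) + 2 * lam * CIJ {p..q} j1 j2"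
  define \<delta> where "\<delta> = min (if j1 < p then m - \<theta> (p - 1) else 1) (if q < j2 then m - \<theta> (q + 1) else 1)"
  have "0 < \<delta>"
    using left right by (simp add: \<delta>_def)
  moreover have "r \<le> \<epsilon> * (card {p..q} / 2)" if "0 < \<epsilon>" "\<epsilon> \<le> \<delta>" for \<epsilon>
  proof -
    have "m \<le> \<theta> p" "m \<le> \<theta> q"
      using above \<open>p \<le> q\<close> by auto
    then have "j1 < p \<Longrightarrow> \<theta> (p - 1) + \<epsilon> \<le> \<theta> p" "q < j2 \<Longrightarrow> \<theta> (q + 1) + \<epsilon> \<le> \<theta> q"
      using \<open>\<epsilon> \<le> \<delta>\<close> by (auto simp: \<delta>_def)
    with assms(2-5) \<open>0 < \<epsilon>\<close> have "Lfun y lam j1 j2 a b (lower_on {p..q} \<epsilon> \<theta>)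
        \<le> Lfun y lam j1 j2 a b \<theta> - \<epsilon> * r + \<epsilon>^2 * card {p..q} / 2"
      unfolding r_def by (intro Lfun_lower_on) auto
    moreover have "Lfun y lam j1 j2 a b \<theta> \<le> Lfun y lam j1 j2 a b (lower_on {p..q} \<epsilon> \<theta>)"
      using minimizer by (simp add: is_minimizer_def)
    ultimately have "\<epsilon> * r \<le> \<epsilon> * (\<epsilon> * (card {p..q} / 2))"
      by (simp add: power2_eq_square)
    with \<open>0 < \<epsilon>\<close> show ?thesis
      by simp
  qed
  ultimately have "r \<le> 0"
    by (rule nonpos_if_le_vanishing_multiples)
  then show ?thesis
    by (simp add: r_def)
qed

lemma run_left_end:
  fixes j1 i :: nat
  assumes "j1 \<le> i" "P i"
  shows "\<exists>p. j1 \<le> p \<and> p \<le> i \<and> (\<forall>j\<in>{p..i}. P j) \<and> (j1 < p \<longrightarrow> \<not> P (p - 1))"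
  using assms
proof (induction i rule: dec_induct)
  case base
  then show ?case by auto
next
  case (step n)
  show ?case
  proof (cases "P n")
    case True
    with step.IH obtain p where "j1 \<le> p" "p \<le> n" "\<forall>j\<in>{p..n}. P j" "j1 < p \<longrightarrow> \<not> P (p - 1)"
      by blast
    with step.prems show ?thesis
      by (intro exI[of _ p]) (auto simp: le_Suc_eq)
  next
    case False
    with step show ?thesis
      by (intro exI[of _ "Suc n"]) auto
  qed
qed

lemma run_right_end:
  fixes i j2 :: nat
  assumes "i \<le> j2" "P i"
  shows "\<exists>q. i \<le> q \<and> q \<le> j2 \<and> (\<forall>j\<in>{i..q}. P j) \<and> (q < j2 \<longrightarrow> \<not> P (q + 1))"
  using assms
proof (induction i rule: inc_induct)
  case base
  then show ?case by auto
next
  case (step n)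
  show ?case
  proof (cases "P (Suc n)")
    case True
    with step.IH obtain q where "Suc n \<le> q" "q \<le> j2" "\<forall>j\<in>{Suc n..q}. P j" "q < j2 \<longrightarrow> \<not> P (q + 1)"
      by blast
    with step.prems show ?thesis
      by (intro exI[of _ q]) (auto simp: Suc_le_eq le_less)
  next
    case False
    with step show ?thesis
      by (intro exI[of _ n]) auto
  qed
qed

lemma maximal_run_around:
  fixes j1 i j2 :: nat
  assumes "j1 \<le> i" "i \<le> j2" "P i"
  obtains p q where "j1 \<le> p" "p \<le> i" "i \<le> q" "q \<le> j2" "\<forall>j\<in>{p..q}. P j"
    "j1 < p \<Longrightarrow> \<not> P (p - 1)" "q < j2 \<Longrightarrow> \<not> P (q + 1)"
proof -
  obtain p where "j1 \<le> p" "p \<le> i" "\<forall>j\<in>{p..i}. P j" "j1 < p \<longrightarrow> \<not> P (p - 1)"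
    using run_left_end[of j1 i P] assms by blast
  moreover obtain q where "i \<le> q" "q \<le> j2" "\<forall>j\<in>{i..q}. P j" "q < j2 \<longrightarrow> \<not> P (q + 1)"
    using run_right_end[of i j2 P] assms by blast
  moreover have "{p..q} \<subseteq> {p..i} \<union> {i..q}"
    by auto
  ultimately show ?thesis
    using that by blast
qed

lemma le_avg_if_residual_sum_le:
  assumes "finite I" "I \<noteq> {}" "\<forall>j\<in>I. m \<le> \<theta> j" "(\<Sum>j\<in>I. \<theta> j - y j) \<le> c"
  shows "m \<le> avg y I + c / card I"
proof -
  have "card I * m \<le> (\<Sum>j\<in>I. \<theta> j)"
    using sum_mono[of I "\<lambda>_. m" \<theta>] assms(3) by simp
  also have "\<dots> \<le> (\<Sum>j\<in>I. y j) + c"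
    using assms(4) by (simp add: sum_subtractf)
  finally have "m \<le> ((\<Sum>j\<in>I. y j) + c) / card I"
    using assms(1,2) by (simp add: pos_le_divide_eq card_gt_0_iff mult.commute)
  then show ?thesis
    by (simp add: avg_def add_divide_distrib)
qed

theorem lemma4:
  fixes y :: "nat \<Rightarrow> real" and n :: nat and lam :: real and i j1 j2 :: nat
  assumes "lam \<ge> 0"
    and "1 \<le> j1" and "j1 \<le> j2" and "j2 \<le> n"
    and "i \<in> {j1..j2}"
  shows "\<forall>a b \<theta>. is_minimizer y lam j1 j2 a b \<theta> \<longrightarrow>
           \<theta> i \<le> Max {avg y I - 2 * lam * CIJ I j1 j2 / real (card I) | I.
                         \<exists>p q. I = {p..q} \<and> I \<subseteq> {j1..j2} \<and> i \<in> I}"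
proof (intro allI impI)
  fix a b \<theta>
  assume minimizer: "is_minimizer y lam j1 j2 a b \<theta>"
  let ?bound = "\<lambda>I. avg y I - 2 * lam * CIJ I j1 j2 / real (card I)"
  let ?S = "{?bound I | I. \<exists>p q. I = {p..q} \<and> I \<subseteq> {j1..j2} \<and> i \<in> I}"
  obtain p q where pq: "j1 \<le> p" "p \<le> i" "i \<le> q" "q \<le> j2"
    and above: "\<forall>j\<in>{p..q}. \<theta> i \<le> \<theta> j"
    and "j1 < p \<Longrightarrow> \<theta> (p - 1) < \<theta> i" "q < j2 \<Longrightarrow> \<theta> (q + 1) < \<theta> i"
    using maximal_run_around[of j1 i j2 "\<lambda>j. \<theta> i \<le> \<theta> j"] assms(5) by (auto simp: not_le)
  then have "(\<Sum>j=p..q. \<theta> j - y j) \<le> - 2 * lam * CIJ {p..q} j1 j2"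
    using minimizer assms(1) by (intro minimizer_residual_sum_le) auto
  with above pq have "\<theta> i \<le> ?bound {p..q}"
    using le_avg_if_residual_sum_le[of "{p..q}" "\<theta> i" \<theta> y "- 2 * lam * CIJ {p..q} j1 j2"]
    by simp
  also have "\<dots> \<le> Max ?S"
  proof (rule Max_ge)
    show "finite ?S"
      by (rule finite_subset[of _ "?bound ` Pow {j1..j2}"]) blast+
    show "?bound {p..q} \<in> ?S"
      using pq by (intro CollectI exI[of _ "{p..q}"] conjI refl exI[of _ p] exI[of _ q]) auto
  qed
  finally show "\<theta> i \<le> Max ?S" .
qed

end
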